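(* Let $G$ be a connected, locally finite graph with exactly one end, and let $\Gamma$ be a group acting quasi-transitively on $G$. Let $N$ be a $\Gamma$-canonical nested set of tight separations of $G$, all of finite order. Then $\vec N$ contains no strictly increasing infinite sequence.
   Context: A group acts quasi-transitively if it acts by automorphisms with finitely many vertex orbits. A separation of $G$ is $\{A,B\}$ with $A\cup B=V(G)$ and no edge between $A\setminus B$ and $B\setminus A$; order $|A\cap B|$; its orientations are $(A,B)$ and $(B,A)$, partially ordered by $(A,B)\le(C,D)$ iff $A\subseteq C$ and $B\supseteq D$. It is tight if $G-(A\cap B)$ has components $C\subseteq G[A\setminus B]$ and $D\subseteq G[B\setminus A]$ such that every vertex of $A\cap B$ has a neighbour in $C$ and one in $D$. A set of separations is nested if any two of its elements have comparable orientations, and $\Gamma$-canonical if it contains $\{g\cdot A,g\cdot B\}$ for each member $\{A,B\}$ and $g\in\Gamma$. $\vec N$ is the set of orientations of elements of $N$. *)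

theory Defs
  imports Main "HOL-Algebra.Group_Action"
begin

definition graph :: "'v set \<Rightarrow> ('v \<Rightarrow> 'v \<Rightarrow> bool) \<Rightarrow> bool" where
  "graph V E \<longleftrightarrow> (\<forall>u v. E u v \<longrightarrow> u \<in> V \<and> v \<in> V \<and> u \<noteq> v \<and> E v u)"

definition conn_avoid :: "'v set \<Rightarrow> ('v \<Rightarrow> 'v \<Rightarrow> bool) \<Rightarrow> 'v set \<Rightarrow> 'v \<Rightarrow> 'v \<Rightarrow> bool" where
  "conn_avoid V E X u w \<longleftrightarrow>
     (\<exists>p :: nat \<Rightarrow> 'v. \<exists>n. p 0 = u \<and> p n = w \<and> (\<forall>i\<le>n. p i \<in> V - X)
        \<and> (\<forall>i<n. E (p i) (p (Suc i))))"

definition connected_graph :: "'v set \<Rightarrow> ('v \<Rightarrow> 'v \<Rightarrow> bool) \<Rightarrow> bool" where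
  "connected_graph V E \<longleftrightarrow> V \<noteq> {} \<and> (\<forall>u\<in>V. \<forall>w\<in>V. conn_avoid V E {} u w)"

definition locally_finite :: "'v set \<Rightarrow> ('v \<Rightarrow> 'v \<Rightarrow> bool) \<Rightarrow> bool" where
  "locally_finite V E \<longleftrightarrow> (\<forall>v\<in>V. finite {w. E v w})"

definition ray :: "'v set \<Rightarrow> ('v \<Rightarrow> 'v \<Rightarrow> bool) \<Rightarrow> (nat \<Rightarrow> 'v) \<Rightarrow> bool" where
  "ray V E r \<longleftrightarrow> inj r \<and> (\<forall>n. r n \<in> V \<and> E (r n) (r (Suc n)))"

definition equiv_rays :: "'v set \<Rightarrow> ('v \<Rightarrow> 'v \<Rightarrow> bool) \<Rightarrow> (nat \<Rightarrow> 'v) \<Rightarrow> (nat \<Rightarrow> 'v) \<Rightarrow> bool" where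
  "equiv_rays V E r s \<longleftrightarrow>
     (\<forall>X. finite X \<longrightarrow> (\<exists>n. \<forall>k\<ge>n. \<forall>l\<ge>n. conn_avoid V E X (r k) (s l)))"

text \<open>Ends are the equivalence classes of rays; G has exactly one end iff there is a ray
  and any two rays are equivalent.\<close>
definition one_ended :: "'v set \<Rightarrow> ('v \<Rightarrow> 'v \<Rightarrow> bool) \<Rightarrow> bool" where
  "one_ended V E \<longleftrightarrow> (\<exists>r. ray V E r) \<and> (\<forall>r s. ray V E r \<longrightarrow> ray V E s \<longrightarrow> equiv_rays V E r s)"

definition acts_by_automorphisms ::
  "('g, 'b) monoid_scheme \<Rightarrow> 'v set \<Rightarrow> ('v \<Rightarrow> 'v \<Rightarrow> bool) \<Rightarrow> ('g \<Rightarrow> 'v \<Rightarrow> 'v) \<Rightarrow> bool" where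
  "acts_by_automorphisms \<Gamma> V E \<phi> \<longleftrightarrow> group_action \<Gamma> V \<phi> \<and>
     (\<forall>g\<in>carrier \<Gamma>. \<forall>u\<in>V. \<forall>w\<in>V. E u w \<longleftrightarrow> E (\<phi> g u) (\<phi> g w))"

definition quasi_transitive ::
  "('g, 'b) monoid_scheme \<Rightarrow> 'v set \<Rightarrow> ('v \<Rightarrow> 'v \<Rightarrow> bool) \<Rightarrow> ('g \<Rightarrow> 'v \<Rightarrow> 'v) \<Rightarrow> bool" where
  "quasi_transitive \<Gamma> V E \<phi> \<longleftrightarrow> acts_by_automorphisms \<Gamma> V E \<phi> \<and> finite (orbits \<Gamma> V \<phi>)"

definition oriented_sep :: "'v set \<Rightarrow> ('v \<Rightarrow> 'v \<Rightarrow> bool) \<Rightarrow> 'v set \<Rightarrow> 'v set \<Rightarrow> bool" where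
  "oriented_sep V E A B \<longleftrightarrow> A \<union> B = V \<and> (\<forall>a\<in>A - B. \<forall>b\<in>B - A. \<not> E a b)"

definition separation :: "'v set \<Rightarrow> ('v \<Rightarrow> 'v \<Rightarrow> bool) \<Rightarrow> 'v set set \<Rightarrow> bool" where
  "separation V E S \<longleftrightarrow> (\<exists>A B. S = {A, B} \<and> oriented_sep V E A B)"

definition orientations :: "'v set set \<Rightarrow> ('v set \<times> 'v set) set" where
  "orientations S = {(A, B). S = {A, B}}"

definition vec :: "'v set set set \<Rightarrow> ('v set \<times> 'v set) set" where
  "vec N = (\<Union>S\<in>N. orientations S)"

definition sep_le :: "'v set \<times> 'v set \<Rightarrow> 'v set \<times> 'v set \<Rightarrow> bool" where
  "sep_le s t \<longleftrightarrow> fst s \<subseteq> fst t \<and> snd s \<supseteq> snd t"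

definition finite_order :: "'v set set \<Rightarrow> bool" where
  "finite_order S \<longleftrightarrow> (\<forall>(A, B)\<in>orientations S. finite (A \<inter> B))"

definition component :: "'v set \<Rightarrow> ('v \<Rightarrow> 'v \<Rightarrow> bool) \<Rightarrow> 'v set \<Rightarrow> 'v set \<Rightarrow> bool" where
  "component V E X C \<longleftrightarrow> (\<exists>x\<in>V - X. C = {y. conn_avoid V E X x y})"

definition tight_oriented :: "'v set \<Rightarrow> ('v \<Rightarrow> 'v \<Rightarrow> bool) \<Rightarrow> 'v set \<Rightarrow> 'v set \<Rightarrow> bool" where
  "tight_oriented V E A B \<longleftrightarrow>
     (\<exists>C D. component V E (A \<inter> B) C \<and> component V E (A \<inter> B) D \<and> C \<subseteq> A - B \<and> D \<subseteq> B - A \<and>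
        (\<forall>x\<in>A \<inter> B. (\<exists>c\<in>C. E x c) \<and> (\<exists>d\<in>D. E x d)))"

definition tight :: "'v set \<Rightarrow> ('v \<Rightarrow> 'v \<Rightarrow> bool) \<Rightarrow> 'v set set \<Rightarrow> bool" where
  "tight V E S \<longleftrightarrow> separation V E S \<and> (\<exists>A B. S = {A, B} \<and> tight_oriented V E A B)"

definition nested :: "'v set set set \<Rightarrow> bool" where
  "nested N \<longleftrightarrow> (\<forall>S\<in>N. \<forall>T\<in>N. \<exists>s\<in>orientations S. \<exists>t\<in>orientations T. sep_le s t)"

definition canonical :: "('g, 'b) monoid_scheme \<Rightarrow> ('g \<Rightarrow> 'v \<Rightarrow> 'v) \<Rightarrow> 'v set set set \<Rightarrow> bool" where
  "canonical \<Gamma> \<phi> N \<longleftrightarrow> (\<forall>A B g. {A, B} \<in> N \<longrightarrow> g \<in> carrier \<Gamma> \<longrightarrow> {\<phi> g ` A, \<phi> g ` B} \<in> N)"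

end

theory Submission
  imports Defs "HOL-Library.Infinite_Set"
begin

(* Let (A_n, B_n) be a strictly increasing sequence in the orientations of N.  If some side
   B_n - A_n is finite, all later separations live inside the finite set B_n, so only
   finitely many of them occur.  Otherwise, as G has one end, every A_n is finite and every
   B_n infinite.  Nestedness of (A_n, B_n) with its translates forbids an automorphism to move
   a vertex of A_n - B_n into A_n \<inter> B_n; with finitely many orbits this implies that from
   some point on no separator vertex ever enters a side A_k - B_k, so the separators increase.
   Tightness bounds them: the components of G - (A_n \<inter> B_n) inside A_n that are attached to a
   fixed separator vertex through the same neighbour are nested, so all separators lie in the
   finite neighbourhood of one such component.  Finally an oriented separation with separator
   X is determined by the neighbours of X on its side A - B, so again only finitely many
   separations occur, contradicting strict monotonicity. *)

section \<open>Reachability avoiding a vertex set\<close>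

inductive reach :: "('v \<Rightarrow> 'v \<Rightarrow> bool) \<Rightarrow> 'v set \<Rightarrow> 'v \<Rightarrow> 'v \<Rightarrow> bool"
  for E :: "'v \<Rightarrow> 'v \<Rightarrow> bool" and S :: "'v set" where
  reach_refl: "u \<in> S \<Longrightarrow> reach E S u u"
| reach_step: "reach E S u w \<Longrightarrow> E w w' \<Longrightarrow> w' \<in> S \<Longrightarrow> reach E S u w'"

lemma reach_in_set: "reach E S u w \<Longrightarrow> u \<in> S \<and> w \<in> S"
  by (induction rule: reach.induct) auto

lemma reach_mono: "reach E S u w \<Longrightarrow> S \<subseteq> T \<Longrightarrow> reach E T u w"
  by (induction rule: reach.induct) (auto intro: reach.intros)

lemma reach_trans:
  assumes "reach E S u v" and "reach E S v w"
  shows "reach E S u w"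
  using assms(2,1)
proof (induction rule: reach.induct)
  case (reach_refl v)
  then show ?case by blast
next
  case (reach_step v w w')
  then show ?case by (blast intro: reach.reach_step)
qed

lemma graph_sym: "graph V E \<Longrightarrow> E u w \<Longrightarrow> E w u"
  by (simp add: graph_def)

lemma reach_sym:
  assumes "graph V E" and "reach E S u w"
  shows "reach E S w u"
  using assms(2)
proof (induction rule: reach.induct)
  case (reach_refl u)
  then show ?case by (rule reach.reach_refl)
next
  case (reach_step u w w')
  have "reach E S w' w"
    using reach_step reach_in_set graph_sym[OF assms(1)] by (meson reach.intros)
  then show ?case
    using reach_step.IH reach_trans by metis
qed

lemma conn_avoid_iff_reach: "conn_avoid V E X u w \<longleftrightarrow> reach E (V - X) u w"
proof
  assume "conn_avoid V E X u w"
  then obtain p n where p: "p 0 = u" "p n = w" "\<forall>i\<le>n. p i \<in> V - X"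
      "\<forall>i<n. E (p i) (p (Suc i))"
    unfolding conn_avoid_def by blast
  have "i \<le> n \<Longrightarrow> reach E (V - X) u (p i)" for i
  proof (induction i)
    case 0
    then show ?case using p by (auto intro: reach_refl)
  next
    case (Suc i)
    then show ?case using p by (metis Suc_leD Suc_le_lessD reach_step)
  qed
  then show "reach E (V - X) u w" using p by auto
next
  assume "reach E (V - X) u w"
  then show "conn_avoid V E X u w"
  proof (induction rule: reach.induct)
    case (reach_refl u)
    then show ?case
      unfolding conn_avoid_def by (intro exI[of _ "\<lambda>_. u"] exI[of _ 0]) auto
  next
    case (reach_step u w w')
    then obtain p n where p: "p 0 = u" "p n = w" "\<forall>i\<le>n. p i \<in> V - X"
        "\<forall>i<n. E (p i) (p (Suc i))"
      unfolding conn_avoid_def by blast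
    let ?q = "p(Suc n := w')"
    have "?q 0 = u" "?q (Suc n) = w'" "\<forall>i\<le>Suc n. ?q i \<in> V - X"
        "\<forall>i<Suc n. E (?q i) (?q (Suc i))"
      using p reach_step by (auto simp: le_Suc_eq less_Suc_eq)
    then show ?case unfolding conn_avoid_def by blast
  qed
qed

lemma connected_graph_reach:
  assumes "connected_graph V E" and "u \<in> V" and "w \<in> V"
  shows "reach E V u w"
  using assms conn_avoid_iff_reach[of V E "{}"] by (simp add: connected_graph_def)

definition neighbours :: "('v \<Rightarrow> 'v \<Rightarrow> bool) \<Rightarrow> 'v set \<Rightarrow> 'v set" where
  "neighbours E X = {y. \<exists>x\<in>X. E x y}"

lemma finite_neighbours:
  assumes "graph V E" and "locally_finite V E" and "finite X"
  shows "finite (neighbours E X)"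
proof -
  have "neighbours E X = (\<Union>x\<in>X \<inter> V. {y. E x y})"
    using assms(1) by (auto simp: neighbours_def graph_def)
  then show ?thesis
    using assms(2,3) by (auto simp: locally_finite_def)
qed

section \<open>Separations and components\<close>

lemma orientations_doubleton: "orientations {A, B} = {(A, B), (B, A)}"
  unfolding orientations_def doubleton_eq_iff by blast

lemma mem_vec_iff: "(A, B) \<in> vec N \<longleftrightarrow> {A, B} \<in> N"
  by (auto simp: vec_def orientations_def)

lemma oriented_sep_union: "oriented_sep V E A B \<Longrightarrow> A \<union> B = V"
  by (simp add: oriented_sep_def)

lemma oriented_sep_sym: "graph V E \<Longrightarrow> oriented_sep V E A B \<Longrightarrow> oriented_sep V E B A"
  unfolding oriented_sep_def graph_def by blast

lemma tight_oriented_sym: "tight_oriented V E A B \<Longrightarrow> tight_oriented V E B A"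
  unfolding tight_oriented_def by (metis Int_commute)

lemma tight_imp_oriented:
  assumes "graph V E" and "tight V E {A, B}"
  shows "oriented_sep V E A B" and "tight_oriented V E A B"
  using assms oriented_sep_sym tight_oriented_sym
  by (auto simp: tight_def separation_def doubleton_eq_iff)

lemma reach_stays_in_side:
  assumes "oriented_sep V E A B" and "reach E (V - A \<inter> B) y z" and "y \<in> A - B"
  shows "z \<in> A - B"
  using assms(2,3)
  by (induction rule: reach.induct) (use assms(1) in \<open>auto simp: oriented_sep_def\<close>)

lemma reach_leaves_side:
  assumes "oriented_sep V E A B" and "reach E V z w" and "z \<in> A - B"
  shows "reach E (A - B) z w \<or> (\<exists>y x. y \<in> A - B \<and> x \<in> A \<inter> B \<and> E y x \<and> reach E (A - B) z y)"
  using assms(2,3)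
proof (induction rule: reach.induct)
  case (reach_refl u)
  then show ?case by (auto intro: reach.reach_refl)
next
  case (reach_step u w w')
  then show ?case
    using assms(1) reach_in_set unfolding oriented_sep_def
    by (metis DiffI IntI Un_iff reach.reach_step)
qed

lemma side_reaches_separator:
  assumes "connected_graph V E" and "oriented_sep V E A B" and "z \<in> A - B" and "B - A \<noteq> {}"
  shows "\<exists>y x. y \<in> A - B \<and> x \<in> A \<inter> B \<and> E y x \<and> reach E (A - B) z y"
proof -
  obtain w where w: "w \<in> B - A" using assms(4) by blast
  have "z \<in> V" and "w \<in> V"
    using oriented_sep_union[OF assms(2)] assms(3) w by blast+
  then have "reach E V z w"
    by (rule connected_graph_reach[OF assms(1)])
  moreover have "w \<notin> A - B"
    using w by blast
  then have "\<not> reach E (A - B) z w"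
    using reach_in_set by metis
  ultimately show ?thesis
    using reach_leaves_side[OF assms(2) _ assms(3)] by metis
qed

lemma side_eq_reach_from:
  assumes "graph V E" and "connected_graph V E" and sep: "oriented_sep V E A B"
    and "B - A \<noteq> {}" and "neighbours E (A \<inter> B) \<inter> (A - B) \<subseteq> T" and "T \<subseteq> A - B"
  shows "A - B = {z. \<exists>y\<in>T. reach E (V - A \<inter> B) y z}"
proof (intro equalityI subsetI)
  fix z assume z: "z \<in> A - B"
  then obtain y x where yx: "y \<in> A - B" "x \<in> A \<inter> B" "E y x" "reach E (A - B) z y"
    using side_reaches_separator[OF assms(2,3) _ assms(4)] by blast
  have "E x y"
    using graph_sym[OF assms(1) yx(3)] .
  then have "y \<in> T"
    using yx(1,2) assms(5) by (auto simp: neighbours_def)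
  moreover have "A - B \<subseteq> V - A \<inter> B"
    using oriented_sep_union[OF sep] by blast
  then have "reach E (V - A \<inter> B) y z"
    by (rule reach_mono[OF reach_sym[OF assms(1) yx(4)]])
  ultimately show "z \<in> {z. \<exists>y\<in>T. reach E (V - A \<inter> B) y z}" by blast
next
  fix z assume "z \<in> {z. \<exists>y\<in>T. reach E (V - A \<inter> B) y z}"
  then obtain y where "y \<in> T" and "reach E (V - A \<inter> B) y z" by blast
  then show "z \<in> A - B"
    using reach_stays_in_side[OF sep] assms(6) by (metis subsetD)
qed

lemma component_eq_reach:
  assumes "graph V E" and "component V E X C" and "c \<in> C"
  shows "C = {y. reach E (V - X) c y}"
proof -
  obtain x where x: "C = {y. reach E (V - X) x y}"
    using assms(2) unfolding component_def conn_avoid_iff_reach by blast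
  then have xc: "reach E (V - X) x c"
    using assms(3) by simp
  then have cx: "reach E (V - X) c x"
    by (rule reach_sym[OF assms(1)])
  have "reach E (V - X) x y \<longleftrightarrow> reach E (V - X) c y" for y
    using reach_trans[OF cx, of y] reach_trans[OF xc, of y] by blast
  then show ?thesis
    using x by simp
qed

lemma component_nonempty: "component V E X C \<Longrightarrow> C \<noteq> {}"
  unfolding component_def conn_avoid_iff_reach by (auto intro: reach_refl)

lemma component_antimono:
  assumes "graph V E" and "component V E X C" and "component V E Y D" and "X \<subseteq> Y"
    and "c \<in> C" and "c \<in> D"
  shows "D \<subseteq> C"
proof
  fix y assume "y \<in> D"
  then have "reach E (V - Y) c y"
    using component_eq_reach[OF assms(1,3,6)] by simp
  moreover have "V - Y \<subseteq> V - X"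
    using assms(4) by blast
  ultimately have "reach E (V - X) c y"
    by (rule reach_mono)
  then show "y \<in> C"
    using component_eq_reach[OF assms(1,2,5)] by simp
qed

lemma tight_separator_nonempty:
  assumes "connected_graph V E" and sep: "oriented_sep V E A B" and "tight_oriented V E A B"
  shows "A \<inter> B \<noteq> {}"
proof -
  obtain C D where "component V E (A \<inter> B) C" "component V E (A \<inter> B) D"
      "C \<subseteq> A - B" "D \<subseteq> B - A"
    using assms(3) unfolding tight_oriented_def by blast
  then obtain z where z: "z \<in> A - B" and ne: "B - A \<noteq> {}"
    using component_nonempty by (metis subset_empty ex_in_conv subsetD)
  obtain y x where "x \<in> A \<inter> B"
    using side_reaches_separator[OF assms(1) sep z ne] by blast
  then show ?thesis
    by blast
qed

section \<open>Koenig's lemma and one-endedness\<close>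

lemma reach_first_step:
  assumes "reach E T v w"
  shows "w = v \<or> (\<exists>y. E v y \<and> reach E (T - {v}) y w)"
  using assms
proof (induction rule: reach.induct)
  case (reach_refl u)
  then show ?case by simp
next
  case (reach_step u w w')
  show ?case
  proof (cases "w' = u")
    case False
    with reach_step have w': "w' \<in> T - {u}" by blast
    from reach_step.IH show ?thesis
    proof
      assume "w = u"
      then show ?thesis
        using reach_step.hyps(2) reach.reach_refl[OF w'] by blast
    next
      assume "\<exists>y. E u y \<and> reach E (T - {u}) y w"
      then obtain y where "E u y" and "reach E (T - {u}) y w" by blast
      then have "reach E (T - {u}) y w'"
        using reach_step.hyps(2) w' by (blast intro: reach.reach_step)
      then show ?thesis
        using \<open>E u y\<close> by blast
    qed
  qed simp
qed

lemma infinite_reach_neighbour: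
  assumes "finite {y. E v y}" and "infinite {w. reach E T v w}"
  shows "\<exists>y. E v y \<and> infinite {w. reach E (T - {v}) y w}"
proof (rule ccontr)
  let ?U = "insert v (\<Union>y\<in>{y. E v y}. {w. reach E (T - {v}) y w})"
  assume "\<not> ?thesis"
  then have "finite ?U"
    using assms(1) by auto
  moreover have "{w. reach E T v w} \<subseteq> ?U"
    using reach_first_step[of E T v] by auto
  ultimately show False
    using assms(2) finite_subset by blast
qed

lemma reach_infinite_imp_mem:
  assumes "infinite {w. reach E T v w}"
  shows "v \<in> T"
proof -
  obtain w where "reach E T v w"
    using infinite_imp_nonempty[OF assms] by blast
  then show ?thesis
    by (rule reach_in_set[THEN conjunct1])
qed

lemma koenig_walk:
  assumes lf: "\<forall>v\<in>S. finite {w. E v w}" and "infinite {w. reach E S v0 w}"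
  shows "\<exists>X r. \<forall>n. X (Suc n) = insert (r n) (X n) \<and> E (r n) (r (Suc n))
    \<and> infinite {w. reach E (S - X n) (r n) w}"
proof -
  let ?good = "\<lambda>(X, v). infinite {w. reach E (S - X) v w}"
  have "\<exists>f. \<forall>n. ?good (f n) \<and> fst (f (Suc n)) = insert (snd (f n)) (fst (f n))
      \<and> E (snd (f n)) (snd (f (Suc n)))"
  proof (rule dependent_nat_choice)
    show "\<exists>x. ?good x"
      using assms(2) by (intro exI[of _ "({}, v0)"]) simp
  next
    fix x :: "'a set \<times> 'a" and n :: nat
    obtain X v where x: "x = (X, v)"
      by fastforce
    assume "?good x"
    then have inf: "infinite {w. reach E (S - X) v w}"
      using x by simp
    then have "finite {y. E v y}"
      using lf reach_infinite_imp_mem[OF inf] by blast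
    then obtain y where "E v y" and "infinite {w. reach E (S - X - {v}) y w}"
      using infinite_reach_neighbour[OF _ inf] by blast
    moreover have "S - X - {v} = S - insert v X"
      by blast
    ultimately show "\<exists>y. ?good y \<and> fst y = insert (snd x) (fst x) \<and> E (snd x) (snd y)"
      using x by (intro exI[of _ "(insert v X, y)"]) simp
  qed
  then obtain f where f: "\<forall>n. ?good (f n) \<and> fst (f (Suc n)) = insert (snd (f n)) (fst (f n))
      \<and> E (snd (f n)) (snd (f (Suc n)))"
    by blast
  show ?thesis
    using f by (intro exI[of _ "\<lambda>n. fst (f n)"] exI[of _ "\<lambda>n. snd (f n)"]) (simp add: case_prod_beta)
qed

lemma koenig_ray:
  assumes "\<forall>v\<in>S. finite {w. E v w}" and "infinite {w. reach E S v0 w}"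
  shows "\<exists>r. inj r \<and> (\<forall>n. r n \<in> S \<and> E (r n) (r (Suc n)))"
proof -
  obtain X r where "\<forall>n. X (Suc n) = insert (r n) (X n) \<and> E (r n) (r (Suc n))
      \<and> infinite {w. reach E (S - X n) (r n) w}"
    using koenig_walk[OF assms] by blast
  then have walk: "\<And>n. X (Suc n) = insert (r n) (X n)" "\<And>n. E (r n) (r (Suc n))"
      "\<And>n. infinite {w. reach E (S - X n) (r n) w}"
    by blast+
  have fresh: "r n \<in> S - X n" for n
    using reach_infinite_imp_mem[OF walk(3)] .
  have visited: "j < k \<Longrightarrow> r j \<in> X k" for j k
    by (induction k) (auto simp: walk(1) less_Suc_eq)
  have "r j \<noteq> r k" if "j < k" for j k
    using visited[OF that] fresh[of k] by auto
  then have "inj r"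
    by (metis injI linorder_neqE_nat)
  then show ?thesis
    using fresh walk(2) by blast
qed

lemma separator_reaches_side:
  assumes g: "graph V E" and c: "connected_graph V E" and sep: "oriented_sep V E A B"
    and ne: "B - A \<noteq> {}" and z: "z \<in> A"
  shows "\<exists>x\<in>A \<inter> B. reach E A x z"
proof (cases "z \<in> B")
  case True
  then show ?thesis
    using reach_refl[OF z] z by blast
next
  case False
  then obtain y x where yx: "x \<in> A \<inter> B" "E y x" "reach E (A - B) z y"
    using side_reaches_separator[OF c sep _ ne] z by blast
  have "reach E A z y"
    using yx(3) by (rule reach_mono) blast
  then have "reach E A z x"
    using yx(2) by (rule reach_step) (use yx(1) in blast)
  then have "reach E A x z"
    by (rule reach_sym[OF g])
  then show ?thesis
    using yx(1) by blast
qed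

lemma ray_in_infinite_side:
  assumes g: "graph V E" and c: "connected_graph V E" and lf: "locally_finite V E"
    and sep: "oriented_sep V E A B" and fin: "finite (A \<inter> B)"
    and inf: "infinite (A - B)" and ne: "B - A \<noteq> {}"
  shows "\<exists>r. ray V E r \<and> (\<forall>n. r n \<in> A)"
proof -
  have AV: "A \<subseteq> V"
    using oriented_sep_union[OF sep] by blast
  have "A \<subseteq> (\<Union>x\<in>A \<inter> B. {w. reach E A x w})"
    using separator_reaches_side[OF g c sep ne] by blast
  moreover have "infinite A"
    using inf by (meson Diff_subset finite_subset)
  ultimately have "infinite (\<Union>x\<in>A \<inter> B. {w. reach E A x w})"
    using finite_subset by blast
  then obtain x where x: "infinite {w. reach E A x w}"
    using fin by blast
  have "\<forall>v\<in>A. finite {w. E v w}"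
    using lf AV by (auto simp: locally_finite_def)
  then obtain r where "inj r" and r: "\<forall>n. r n \<in> A \<and> E (r n) (r (Suc n))"
    using koenig_ray[OF _ x] by blast
  then show ?thesis
    unfolding ray_def using AV by blast
qed

lemma inj_eventually_avoids:
  fixes r :: "nat \<Rightarrow> 'a"
  assumes "inj r" and "finite X"
  shows "\<exists>k\<ge>n. r k \<notin> X"
proof (rule ccontr)
  assume "\<not> ?thesis"
  then have "{n..} \<subseteq> r -` X"
    by auto
  moreover have "finite (r -` X)"
    using assms by (rule finite_vimageI[rotated])
  ultimately have "finite {n..}"
    by (rule finite_subset)
  then show False
    using infinite_Ici by blast
qed

lemma one_ended_side_finite:
  assumes g: "graph V E" and c: "connected_graph V E" and lf: "locally_finite V E"
    and one_end: "one_ended V E" and sep: "oriented_sep V E A B" and fin: "finite (A \<inter> B)"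
  shows "finite (A - B) \<or> finite (B - A)"
proof (rule ccontr)
  assume "\<not> ?thesis"
  then have inf: "infinite (A - B)" "infinite (B - A)"
    by auto
  then have ne: "A - B \<noteq> {}" "B - A \<noteq> {}"
    by (metis finite.emptyI)+
  obtain r where r: "ray V E r" "\<forall>n. r n \<in> A"
    using ray_in_infinite_side[OF g c lf sep fin inf(1) ne(2)] by blast
  have fin': "finite (B \<inter> A)"
    using fin by (simp add: Int_commute)
  obtain t where t: "ray V E t" "\<forall>n. t n \<in> B"
    using ray_in_infinite_side[OF g c lf oriented_sep_sym[OF g sep] fin' inf(2) ne(1)] by blast
  have "equiv_rays V E r t"
    using one_end r(1) t(1) by (simp add: one_ended_def)
  then obtain n where n: "\<forall>k\<ge>n. \<forall>l\<ge>n. conn_avoid V E (A \<inter> B) (r k) (t l)"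
    using fin unfolding equiv_rays_def by blast
  have "inj r" and "inj t"
    using r(1) t(1) by (simp_all add: ray_def)
  then obtain k l where kl: "k \<ge> n" "r k \<notin> A \<inter> B" "l \<ge> n" "t l \<notin> A \<inter> B"
    using inj_eventually_avoids[OF _ fin] by meson
  then have "reach E (V - A \<inter> B) (r k) (t l)"
    using n by (simp add: conn_avoid_iff_reach)
  moreover have "r k \<in> A - B"
    using r(2) kl(2) by blast
  ultimately have "t l \<in> A - B"
    by (rule reach_stays_in_side[OF sep])
  then show False
    using t(2) kl(4) by blast
qed

section \<open>Separations moved by a group action\<close>

lemma card_eq_comparable_imp_eq:
  assumes "finite X" and "finite Y" and "card X = card Y" and "X \<subseteq> Y \<or> Y \<subseteq> X"
  shows "X = Y"
  using assms card_subset_eq by metis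

text \<open>As A is finite and B infinite, a translate of (A, B) nested with it either fixes A, and
  then by counting also the separator, or has A inside its large side h ` B.\<close>

lemma nested_image_avoids_separator:
  assumes inj: "inj_on h V" and AB: "A \<union> B = V" and fin: "finite A" and inf: "infinite B"
    and nested: "\<exists>s\<in>orientations {A, B}. \<exists>t\<in>orientations {h ` A, h ` B}. sep_le s t"
    and w: "w \<in> A - B"
  shows "h w \<notin> A \<inter> B"
proof -
  have AV: "A \<subseteq> V" and BV: "B \<subseteq> V"
    using AB by blast+
  have hw: "h w \<notin> h ` B"
    using inj_on_image_mem_iff[OF inj _ BV, of w] w AV by blast
  have "card (h ` A) = card A"
    using card_image[OF inj_on_subset[OF inj AV]] .
  then have A_fixed: "h ` A = A" if "A \<subseteq> h ` A \<or> h ` A \<subseteq> A"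
    using card_eq_comparable_imp_eq[of "h ` A" A] fin that by auto
  have "card (h ` (A \<inter> B)) = card (A \<inter> B)"
    using card_image[OF inj_on_subset[OF inj, of "A \<inter> B"]] AV by blast
  then have card_sep: "card (h ` A \<inter> h ` B) = card (A \<inter> B)"
    using inj_on_image_Int[OF inj AV BV] by simp
  from nested consider "h ` A = A" "h ` B \<subseteq> B \<or> B \<subseteq> h ` B" | "A \<subseteq> h ` B" | "B \<subseteq> h ` A"
    unfolding orientations_doubleton sep_le_def using A_fixed by auto
  then show ?thesis
  proof cases
    case 1
    then have "h ` A \<inter> h ` B \<subseteq> A \<inter> B \<or> A \<inter> B \<subseteq> h ` A \<inter> h ` B"
      by blast
    then have "h ` A \<inter> h ` B = A \<inter> B"
      by (rule card_eq_comparable_imp_eq[OF _ _ card_sep, rotated 2]) (use fin in auto)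
    then show ?thesis
      using hw by blast
  next
    case 2
    then show ?thesis
      using hw by blast
  next
    case 3
    then show ?thesis
      using fin inf by (meson finite_imageI finite_subset)
  qed
qed

lemma eventually_meets_orbits:
  fixes P :: "nat \<Rightarrow> 'a set"
  assumes ga: "group_action G V \<phi>" and orbits: "finite (orbits G V \<phi>)"
    and mono: "mono P" and PV: "\<And>n. P n \<subseteq> V"
  shows "\<exists>m. \<forall>n\<ge>m. \<forall>k. \<forall>x\<in>P k. \<exists>g\<in>carrier G. x \<in> \<phi> g ` P n"
proof -
  define first where "first Orb = (LEAST j. Orb \<inter> P j \<noteq> {})" for Orb
  define m where "m = Max (insert 0 (first ` orbits G V \<phi>))"
  have "\<exists>g\<in>carrier G. x \<in> \<phi> g ` P n" if "m \<le> n" and x: "x \<in> P k" for n k x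
  proof -
    let ?O = "orbit G \<phi> x"
    have xV: "x \<in> V"
      using x PV by blast
    then have "?O \<in> orbits G V \<phi>"
      by (auto simp: orbits_def)
    then have "first ?O \<le> m"
      unfolding m_def using orbits by (simp add: Max_ge_iff)
    then have "first ?O \<le> n"
      using \<open>m \<le> n\<close> by simp
    have "?O \<inter> P k \<noteq> {}"
      using group_action.orbit_refl[OF ga xV] x by blast
    then have "?O \<inter> P (first ?O) \<noteq> {}"
      unfolding first_def by (rule LeastI)
    then obtain w where w: "w \<in> ?O" "w \<in> P n"
      using monoD[OF mono \<open>first ?O \<le> n\<close>] by blast
    then have "x \<in> orbit G \<phi> w"
      using group_action.orbit_sym[OF ga xV] PV by blast
    then show ?thesis
      using w(2) by (auto simp: orbit_def)
  qed
  then show ?thesis by blast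
qed

section \<open>Increasing sequences of separations\<close>

lemma sep_le_partial_order: "reflp sep_le" "transp sep_le" "antisymp sep_le"
  by (auto simp: reflp_def transp_def antisymp_def sep_le_def prod_eq_iff)

lemma strict_chain_infinite_tail:
  fixes f :: "nat \<Rightarrow> 'a"
  assumes "reflp R" and "transp R" and "antisymp R"
    and chain: "\<And>n. R (f n) (f (Suc n))" and strict: "\<And>n. f n \<noteq> f (Suc n)"
  shows "infinite (f ` {m..})"
proof -
  have le: "R (f j) (f k)" if "j \<le> k" for j k
    using that
  proof (induction k rule: dec_induct)
    case base
    then show ?case using assms(1) by (simp add: reflpD)
  next
    case (step k)
    then show ?case using assms(2) chain by (meson transpD)
  qed
  have "f j \<noteq> f k" if "j < k" for j k
  proof
    assume "f j = f k"
    then have "R (f (Suc j)) (f j)"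
      using le[of "Suc j" k] that by simp
    then show False
      using chain[of j] strict[of j] assms(3) by (meson antisympD)
  qed
  then have "inj f"
    by (metis injI linorder_neqE_nat)
  then show ?thesis
    using infinite_Ici[of m] by (meson finite_imageD inj_on_subset subset_UNIV)
qed

locale sep_chain =
  fixes V :: "'v set" and E :: "'v \<Rightarrow> 'v \<Rightarrow> bool" and A B :: "nat \<Rightarrow> 'v set"
  assumes graph: "graph V E"
    and sep: "\<And>n. oriented_sep V E (A n) (B n)"
    and finite_sep: "\<And>n. finite (A n \<inter> B n)"
    and A_mono: "mono A" and B_antimono: "antimono B"
begin

lemma union_eq: "A n \<union> B n = V"
  using oriented_sep_union[OF sep] .

lemma side_mono: "mono (\<lambda>n. A n - B n)"
  using A_mono B_antimono unfolding mono_def antimono_def by blast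

lemma finite_tail_if_finite_side:
  assumes "finite (B n0 - A n0)"
  shows "finite ((\<lambda>n. (A n, B n)) ` {n0..})"
proof -
  have "B n0 = (A n0 \<inter> B n0) \<union> (B n0 - A n0)"
    by blast
  then have fin: "finite (B n0)"
    using assms finite_sep[of n0] by (metis finite_UnI)
  let ?sep_of = "\<lambda>(X, Y). ((V - B n0) \<union> X, Y)"
  have "(A n, B n) \<in> ?sep_of ` (Pow (B n0) \<times> Pow (B n0))" if "n0 \<le> n" for n
  proof (rule image_eqI)
    have "B n \<subseteq> B n0"
      using antimonoD[OF B_antimono that] .
    then show "(A n, B n) = ?sep_of (A n \<inter> B n0, B n)"
      using union_eq[of n] by auto
    show "(A n \<inter> B n0, B n) \<in> Pow (B n0) \<times> Pow (B n0)"
      using \<open>B n \<subseteq> B n0\<close> by blast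
  qed
  then have "(\<lambda>n. (A n, B n)) ` {n0..} \<subseteq> ?sep_of ` (Pow (B n0) \<times> Pow (B n0))"
    by blast
  then show ?thesis
    using fin by (meson finite_Pow_iff finite_SigmaI finite_imageI finite_subset)
qed

lemma separators_eventually_mono:
  assumes ga: "group_action G V \<phi>" and orbits: "finite (orbits G V \<phi>)"
    and "canonical G \<phi> N" and "nested N" and in_N: "\<And>n. {A n, B n} \<in> N"
    and fin: "\<And>n. finite (A n)" and inf: "\<And>n. infinite (B n)"
  obtains m where "\<And>n n'. m \<le> n \<Longrightarrow> n \<le> n' \<Longrightarrow> A n \<inter> B n \<subseteq> A n' \<inter> B n'"
proof -
  have nested: "\<exists>s\<in>orientations {A n, B n}. \<exists>t\<in>orientations {\<phi> g ` A n, \<phi> g ` B n}. sep_le s t"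
    if "g \<in> carrier G" for n g
  proof -
    have "{\<phi> g ` A n, \<phi> g ` B n} \<in> N"
      using \<open>canonical G \<phi> N\<close> in_N that unfolding canonical_def by blast
    then show ?thesis
      using \<open>nested N\<close> in_N unfolding nested_def by blast
  qed
  have "A n - B n \<subseteq> V" for n
    using union_eq[of n] by blast
  then obtain m where m: "\<forall>n\<ge>m. \<forall>k. \<forall>x\<in>A k - B k. \<exists>g\<in>carrier G. x \<in> \<phi> g ` (A n - B n)"
    using eventually_meets_orbits[OF ga orbits side_mono] by blast
  \<comment> \<open>a separator vertex in some side would be the translate of a side vertex of the
    same separation\<close>
  have outside: "x \<notin> A k - B k" if "m \<le> n" and x: "x \<in> A n \<inter> B n" for n k x
  proof
    assume "x \<in> A k - B k"
    then obtain g w where g: "g \<in> carrier G" and w: "w \<in> A n - B n" and "x = \<phi> g w"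
      using m \<open>m \<le> n\<close> by blast
    moreover have "\<phi> g w \<notin> A n \<inter> B n"
      using nested_image_avoids_separator[OF group_action.inj_prop[OF ga g] union_eq fin inf
          nested[OF g] w] .
    ultimately show False
      using x by blast
  qed
  have "A n \<inter> B n \<subseteq> A n' \<inter> B n'" if "m \<le> n" and "n \<le> n'" for n n'
    using outside[OF that(1)] monoD[OF A_mono that(2)] by blast
  then show ?thesis
    by (rule that)
qed

lemma separators_in_neighbours_of_component:
  assumes C: "\<And>n. component V E (A n \<inter> B n) (C n)"
    and C_attached: "\<And>n x. x \<in> A n \<inter> B n \<Longrightarrow> \<exists>c\<in>C n. E x c"
    and sep_mono: "\<And>n n'. m \<le> n \<Longrightarrow> n \<le> n' \<Longrightarrow> A n \<inter> B n \<subseteq> A n' \<inter> B n'"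
    and I: "infinite I" and shared: "\<And>n. n \<in> I \<Longrightarrow> m \<le> n \<and> c \<in> C n"
    and "n1 \<in> I" and "m \<le> n"
  shows "A n \<inter> B n \<subseteq> neighbours E (C n1)"
proof
  fix x assume x: "x \<in> A n \<inter> B n"
  obtain n' where n': "max n n1 \<le> n'" "n' \<in> I"
    using I unfolding infinite_nat_iff_unbounded_le by blast
  have "m \<le> n1" and "c \<in> C n1" and "c \<in> C n'"
    using shared \<open>n1 \<in> I\<close> n'(2) by blast+
  then have "C n' \<subseteq> C n1"
    using n'(1) by (intro component_antimono[OF graph C C sep_mono]) auto
  moreover have "x \<in> A n' \<inter> B n'"
    using sep_mono[OF \<open>m \<le> n\<close>] x n'(1) by auto
  then obtain y where "y \<in> C n'" and "E x y"
    using C_attached by blast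
  ultimately show "x \<in> neighbours E (C n1)"
    unfolding neighbours_def using graph_sym[OF graph] by blast
qed

text \<open>The tight components attached to a separator vertex x0 through the same neighbour of x0
  form a decreasing family, and by pigeonhole infinitely many of them share that neighbour.\<close>

lemma separators_bounded:
  assumes conn: "connected_graph V E" and lf: "locally_finite V E"
    and tight: "\<And>n. tight_oriented V E (A n) (B n)" and fin_side: "\<And>n. finite (A n - B n)"
    and sep_mono: "\<And>n n'. m \<le> n \<Longrightarrow> n \<le> n' \<Longrightarrow> A n \<inter> B n \<subseteq> A n' \<inter> B n'"
  obtains F where "finite F" and "\<And>n. m \<le> n \<Longrightarrow> A n \<inter> B n \<subseteq> F"
proof -
  have "\<forall>n. \<exists>C. component V E (A n \<inter> B n) C \<and> C \<subseteq> A n - B n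
      \<and> (\<forall>x\<in>A n \<inter> B n. \<exists>c\<in>C. E x c)"
    using tight unfolding tight_oriented_def by blast
  then obtain C where "\<forall>n. component V E (A n \<inter> B n) (C n) \<and> C n \<subseteq> A n - B n
      \<and> (\<forall>x\<in>A n \<inter> B n. \<exists>c\<in>C n. E x c)"
    by (rule choice[THEN exE])
  then have C: "\<And>n. component V E (A n \<inter> B n) (C n)" "\<And>n. C n \<subseteq> A n - B n"
      "\<And>n x. x \<in> A n \<inter> B n \<Longrightarrow> \<exists>c\<in>C n. E x c"
    by blast+
  obtain x0 where x0: "x0 \<in> A m \<inter> B m"
    using tight_separator_nonempty[OF conn sep tight] by blast
  then have "finite {y. E x0 y}"
    using lf union_eq[of m] unfolding locally_finite_def by blast
  have "\<forall>n. \<exists>c. m \<le> n \<longrightarrow> c \<in> C n \<and> E x0 c"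
    using C(3) sep_mono[OF order_refl] x0 by blast
  then obtain c where "\<forall>n. m \<le> n \<longrightarrow> c n \<in> C n \<and> E x0 (c n)"
    by (rule choice[THEN exE])
  then have c: "\<And>n. m \<le> n \<Longrightarrow> c n \<in> C n \<and> E x0 (c n)"
    by blast
  then have "c ` {m..} \<subseteq> {y. E x0 y}"
    by blast
  then have "finite (c ` {m..})"
    using \<open>finite {y. E x0 y}\<close> by (rule finite_subset)
  then obtain n1 where n1: "n1 \<in> {m..}" and I: "infinite {n \<in> {m..}. c n = c n1}"
    using pigeonhole_infinite[OF infinite_Ici] by blast
  have shared: "m \<le> n \<and> c n1 \<in> C n" if "n \<in> {n \<in> {m..}. c n = c n1}" for n
    using that c[of n] by auto
  have n1_shared: "n1 \<in> {n \<in> {m..}. c n = c n1}"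
    using n1 by simp
  have "finite (C n1)"
    using C(2) fin_side by (rule finite_subset)
  then have "finite (neighbours E (C n1))"
    by (rule finite_neighbours[OF graph lf])
  moreover have "A n \<inter> B n \<subseteq> neighbours E (C n1)" if "m \<le> n" for n
    using separators_in_neighbours_of_component[OF C(1,3) sep_mono I shared n1_shared that] .
  ultimately show ?thesis
    by (rule that)
qed

lemma finite_tail_if_separators_bounded:
  assumes conn: "connected_graph V E" and lf: "locally_finite V E"
    and ne: "\<And>n. B n - A n \<noteq> {}"
    and "finite F" and bounded: "\<And>n. m \<le> n \<Longrightarrow> A n \<inter> B n \<subseteq> F"
  shows "finite ((\<lambda>n. (A n, B n)) ` {m..})"
proof -
  define N where "N = neighbours E F"
  define side where "side X T = {z. \<exists>y\<in>T. reach E (V - X) y z}" for X T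
  let ?sep_of = "\<lambda>(X, T). (side X T \<union> X, V - side X T)"
  have "(A n, B n) \<in> ?sep_of ` (Pow F \<times> Pow N)" if "m \<le> n" for n
  proof (rule image_eqI)
    have "neighbours E (A n \<inter> B n) \<subseteq> N"
      using bounded[OF that] by (auto simp: N_def neighbours_def)
    then have "A n - B n = side (A n \<inter> B n) (N \<inter> (A n - B n))"
      unfolding side_def by (intro side_eq_reach_from[OF graph conn sep ne]) auto
    then show "(A n, B n) = ?sep_of (A n \<inter> B n, N \<inter> (A n - B n))"
      using union_eq[of n] by auto
    show "(A n \<inter> B n, N \<inter> (A n - B n)) \<in> Pow F \<times> Pow N"
      using bounded[OF that] by blast
  qed
  then have "(\<lambda>n. (A n, B n)) ` {m..} \<subseteq> ?sep_of ` (Pow F \<times> Pow N)"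
    by blast
  moreover have "finite N"
    unfolding N_def using finite_neighbours[OF graph lf \<open>finite F\<close>] .
  ultimately show ?thesis
    using \<open>finite F\<close> by (meson finite_Pow_iff finite_SigmaI finite_imageI finite_subset)
qed

lemma finite_tail:
  assumes conn: "connected_graph V E" and lf: "locally_finite V E" and one_end: "one_ended V E"
    and tight: "\<And>n. tight_oriented V E (A n) (B n)"
    and ga: "group_action G V \<phi>" and orbits: "finite (orbits G V \<phi>)"
    and "canonical G \<phi> N" and "nested N" and in_N: "\<And>n. {A n, B n} \<in> N"
  obtains m where "finite ((\<lambda>n. (A n, B n)) ` {m..})"
proof (cases "\<exists>n. finite (B n - A n)")
  case True
  then obtain n0 where "finite (B n0 - A n0)" ..
  from finite_tail_if_finite_side[OF this] show ?thesis
    by (rule that)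
next
  case False
  then have fin_side: "finite (A n - B n)" and ne: "B n - A n \<noteq> {}" for n
    using one_ended_side_finite[OF graph conn lf one_end sep finite_sep] by (metis finite.emptyI)+
  have fin: "finite (A n)" for n
    using fin_side[of n] finite_sep[of n] by (metis Int_Diff_Un finite_UnI)
  have inf: "infinite (B n)" for n
    using False by (meson Diff_subset finite_subset)
  obtain m where "\<And>n n'. m \<le> n \<Longrightarrow> n \<le> n' \<Longrightarrow> A n \<inter> B n \<subseteq> A n' \<inter> B n'"
    using separators_eventually_mono[OF ga orbits assms(7,8) in_N fin inf] by metis
  then obtain F where "finite F" and "\<And>n. m \<le> n \<Longrightarrow> A n \<inter> B n \<subseteq> F"
    using separators_bounded[OF conn lf tight fin_side] by metis
  from finite_tail_if_separators_bounded[OF conn lf ne this] show ?thesis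
    by (rule that)
qed

end

theorem lemma7p6:
  fixes V :: "'v set" and E :: "'v \<Rightarrow> 'v \<Rightarrow> bool"
    and \<Gamma> :: "('g, 'b) monoid_scheme" and \<phi> :: "'g \<Rightarrow> 'v \<Rightarrow> 'v"
    and N :: "'v set set set"
  assumes "graph V E" and "connected_graph V E" and "locally_finite V E" and "one_ended V E"
    and "quasi_transitive \<Gamma> V E \<phi>"
    and "canonical \<Gamma> \<phi> N" and "nested N"
    and "\<forall>S\<in>N. tight V E S \<and> finite_order S"
  shows "\<not> (\<exists>f :: nat \<Rightarrow> 'v set \<times> 'v set. \<forall>n. f n \<in> vec N \<and> sep_le (f n) (f (Suc n)) \<and> f n \<noteq> f (Suc n))"
proof
  assume "\<exists>f :: nat \<Rightarrow> 'v set \<times> 'v set. \<forall>n. f n \<in> vec N \<and> sep_le (f n) (f (Suc n)) \<and> f n \<noteq> f (Suc n)"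
  then obtain f :: "nat \<Rightarrow> 'v set \<times> 'v set"
    where f: "\<And>n. f n \<in> vec N" "\<And>n. sep_le (f n) (f (Suc n))" "\<And>n. f n \<noteq> f (Suc n)"
    by blast
  define A where "A n = fst (f n)" for n
  define B where "B n = snd (f n)" for n
  have f_eq: "f = (\<lambda>n. (A n, B n))"
    by (simp add: A_def B_def)
  have in_N: "{A n, B n} \<in> N" for n
    using f(1)[of n] by (simp add: f_eq mem_vec_iff)
  have "tight V E {A n, B n}" and "finite_order {A n, B n}" for n
    using assms(8) in_N by blast+
  then have tight: "oriented_sep V E (A n) (B n)" "tight_oriented V E (A n) (B n)"
    "finite (A n \<inter> B n)" for n
    using tight_imp_oriented[OF assms(1)] by (simp_all add: finite_order_def orientations_doubleton)
  interpret sep_chain V E A B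
    using assms(1) tight f(2) unfolding f_eq
    by unfold_locales (auto simp: mono_iff_le_Suc antimono_iff_le_Suc sep_le_def)
  have "group_action \<Gamma> V \<phi>" and "finite (orbits \<Gamma> V \<phi>)"
    using assms(5) by (simp_all add: quasi_transitive_def acts_by_automorphisms_def)
  then obtain m where "finite (f ` {m..})"
    using finite_tail[OF assms(2-4) tight(2) _ _ assms(6,7) in_N] unfolding f_eq by metis
  moreover have "infinite (f ` {m..})"
    using strict_chain_infinite_tail[of sep_le f, OF sep_le_partial_order f(2,3)] .
  ultimately show False
    by contradiction
qed

end
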